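(* Let $f_1,\dots,f_n\colon\mathbb R\to\mathbb R$ and $\eta\colon\mathbb R\times\mathbb R\to(0,\infty)$ be smooth with $\eta(x,0)=1$, and consider the metric $(\star)$ on $\mathbb R^{n+2}$, whose scalar curvature is $-2\eta_{uu}/\eta$. If $\mathrm{Scal}\le-2$ everywhere and $|\eta_u(x,0)|\le1$ for all $x$, then the metric is complete.
   Context: The metric $(\star)$: on $\mathbb R\times\mathbb R^{n+1}$ with coordinates $(x,u,v_1,\dots,v_n)$, conventions $v_0=u$, $v_{-1}=v_{n+1}=0$, $f_0=f_{n+1}=0$, $g_{\eta,f}=\eta(x,u)^2dx^2+\sum_{j=0}^n\big(dv_j+(v_{j-1}f_j(x)-v_{j+1}f_{j+1}(x))dx\big)^2$. $|\eta_u(x,0)|$ is the absolute geodesic curvature of $\gamma(x)=(x,0,\dots,0)$. *)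

theory Defs
  imports "HOL-Analysis.Analysis"
begin

definition smooth1 :: "(real \<Rightarrow> real) \<Rightarrow> bool" where
  "smooth1 f \<longleftrightarrow> (\<forall>k x. ((deriv ^^ k) f) differentiable (at x))"

definition pdx :: "(real \<Rightarrow> real \<Rightarrow> real) \<Rightarrow> real \<Rightarrow> real \<Rightarrow> real" where
  "pdx g = (\<lambda>x u. deriv (\<lambda>t. g t u) x)"

definition pdu :: "(real \<Rightarrow> real \<Rightarrow> real) \<Rightarrow> real \<Rightarrow> real \<Rightarrow> real" where
  "pdu g = (\<lambda>x u. deriv (\<lambda>t. g x t) u)"

text \<open>Iterated partial derivative along a list of directions (True = x, False = u).\<close>
definition iter_pd :: "bool list \<Rightarrow> (real \<Rightarrow> real \<Rightarrow> real) \<Rightarrow> real \<Rightarrow> real \<Rightarrow> real" where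
  "iter_pd ds g = foldr (\<lambda>d h. if d then pdx h else pdu h) ds g"

definition smooth2 :: "(real \<Rightarrow> real \<Rightarrow> real) \<Rightarrow> bool" where
  "smooth2 g \<longleftrightarrow> (\<forall>ds. continuous_on UNIV (\<lambda>p. iter_pd ds g (fst p) (snd p)) \<and>
      (\<forall>x u. (\<lambda>t. iter_pd ds g t u) differentiable (at x) \<and>
             (\<lambda>t. iter_pd ds g x t) differentiable (at u)))"

text \<open>Points of R x R^(n+1) are pairs (x, v) with v j the coordinate v_j for j = 0..n
  (v_0 = u); coordinates v j with j > n are ignored.  The functions f_1..f_n are given by
  f j for 1 \<le> j \<le> n; fext extends by f_0 = f_(n+1) = 0.\<close>
definition fext :: "nat \<Rightarrow> (nat \<Rightarrow> real \<Rightarrow> real) \<Rightarrow> nat \<Rightarrow> real \<Rightarrow> real" where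
  "fext n f j = (if 1 \<le> j \<and> j \<le> n then f j else (\<lambda>_. 0))"

text \<open>Squared g-norm of the tangent vector (dx, dv) at the point (x, v).
  The conventions v_(-1) = v_(n+1) = 0 are harmless since they are multiplied by
  f_0 = f_(n+1) = 0.\<close>
definition gsq :: "nat \<Rightarrow> (real \<Rightarrow> real \<Rightarrow> real) \<Rightarrow> (nat \<Rightarrow> real \<Rightarrow> real)
    \<Rightarrow> real \<Rightarrow> (nat \<Rightarrow> real) \<Rightarrow> real \<Rightarrow> (nat \<Rightarrow> real) \<Rightarrow> real" where
  "gsq n \<eta> f x v dx dv =
     (\<eta> x (v 0))\<^sup>2 * dx\<^sup>2 +
     (\<Sum>j\<le>n. (dv j + (v (j - 1) * fext n f j x - v (j + 1) * fext n f (j + 1) x) * dx)\<^sup>2)"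

definition adm_curve :: "nat \<Rightarrow> (real \<Rightarrow> real) \<Rightarrow> (nat \<Rightarrow> real \<Rightarrow> real) \<Rightarrow> bool" where
  "adm_curve n X V \<longleftrightarrow> X C1_differentiable_on {0..1} \<and> (\<forall>j\<le>n. V j C1_differentiable_on {0..1})"

definition curve_length :: "nat \<Rightarrow> (real \<Rightarrow> real \<Rightarrow> real) \<Rightarrow> (nat \<Rightarrow> real \<Rightarrow> real)
    \<Rightarrow> (real \<Rightarrow> real) \<Rightarrow> (nat \<Rightarrow> real \<Rightarrow> real) \<Rightarrow> real" where
  "curve_length n \<eta> f X V =
     integral {0..1} (\<lambda>t. sqrt (gsq n \<eta> f (X t) (\<lambda>j. V j t)
        (vector_derivative X (at t)) (\<lambda>j. vector_derivative (V j) (at t))))"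

definition rdist :: "nat \<Rightarrow> (real \<Rightarrow> real \<Rightarrow> real) \<Rightarrow> (nat \<Rightarrow> real \<Rightarrow> real)
    \<Rightarrow> real \<times> (nat \<Rightarrow> real) \<Rightarrow> real \<times> (nat \<Rightarrow> real) \<Rightarrow> real" where
  "rdist n \<eta> f p q = Inf {curve_length n \<eta> f X V | X V. adm_curve n X V \<and>
      X 0 = fst p \<and> X 1 = fst q \<and> (\<forall>j\<le>n. V j 0 = snd p j \<and> V j 1 = snd q j)}"

definition metric_complete :: "nat \<Rightarrow> (real \<Rightarrow> real \<Rightarrow> real) \<Rightarrow> (nat \<Rightarrow> real \<Rightarrow> real) \<Rightarrow> bool" where
  "metric_complete n \<eta> f \<longleftrightarrow>
     (\<forall>P :: nat \<Rightarrow> real \<times> (nat \<Rightarrow> real).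
        (\<forall>e>0. \<exists>N. \<forall>m\<ge>N. \<forall>k\<ge>N. rdist n \<eta> f (P m) (P k) < e) \<longrightarrow>
        (\<exists>q. (\<lambda>k. rdist n \<eta> f (P k) q) \<longlonglongrightarrow> 0))"

definition scal :: "(real \<Rightarrow> real \<Rightarrow> real) \<Rightarrow> real \<Rightarrow> real \<Rightarrow> real" where
  "scal \<eta> x u = - 2 * pdu (pdu \<eta>) x u / \<eta> x u"

end

theory Submission
  imports Defs
begin

text \<open>
  The curvature hypothesis says \<open>\<eta>\<^sub>u\<^sub>u \<ge> \<eta>\<close>; together with \<open>\<eta>(x,0) = 1\<close> and
  \<open>|\<eta>\<^sub>u(x,0)| \<le> 1\<close> an ODE comparison gives \<open>\<eta>(x,u) \<ge> exp (-|u|)\<close>.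
  The off-diagonal terms of the metric rotate the fibre coordinates \<open>v\<close>, so along a curve
  the Euclidean norm of \<open>v\<close> grows at most by the \<open>g\<close>-length.  Hence a curve of length
  at most 1 starting in a bounded set keeps \<open>u = v\<^sub>0\<close> bounded, so \<open>\<eta>\<close> is bounded below
  along it, and all coordinates move by at most a constant times the length.  Conversely,
  straight segments show that the distance is locally Lipschitz in the coordinates.  A Cauchy
  sequence for the distance is therefore a Cauchy sequence of coordinates, and it converges,
  in the distance, to the coordinate limit.
\<close>

section \<open>A lower bound for \<open>\<eta>\<close>\<close>

lemma exp_neg_le_of_second_deriv_ge:
  fixes \<phi> \<phi>' \<phi>'' :: "real \<Rightarrow> real"
  assumes \<phi>: "\<And>t. 0 \<le> t \<Longrightarrow> (\<phi> has_real_derivative \<phi>' t) (at t)"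
    and \<phi>': "\<And>t. 0 \<le> t \<Longrightarrow> (\<phi>' has_real_derivative \<phi>'' t) (at t)"
    and ge: "\<And>t. 0 \<le> t \<Longrightarrow> \<phi> t \<le> \<phi>'' t"
    and init: "\<phi> 0 = 1" "-1 \<le> \<phi>' 0"
    and u: "0 \<le> u"
  shows "exp (- u) \<le> \<phi> u"
proof -
  have deriv_add_nonneg: "0 \<le> \<phi>' s + \<phi> s" if "0 \<le> s" for s
  proof -
    have "exp (- 0) * (\<phi>' 0 + \<phi> 0) \<le> exp (- s) * (\<phi>' s + \<phi> s)"
    proof (rule DERIV_nonneg_imp_nondecreasing[OF that])
      fix y :: real assume "0 \<le> y"
      then have "((\<lambda>s. exp (- s) * (\<phi>' s + \<phi> s)) has_real_derivative exp (- y) * (\<phi>'' y - \<phi> y)) (at y)"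
        by (auto intro!: derivative_eq_intros \<phi> \<phi>' simp: algebra_simps)
      moreover have "0 \<le> exp (- y) * (\<phi>'' y - \<phi> y)"
        using ge[OF \<open>0 \<le> y\<close>] by simp
      ultimately show "\<exists>z. ((\<lambda>s. exp (- s) * (\<phi>' s + \<phi> s)) has_real_derivative z) (at y) \<and> 0 \<le> z"
        by blast
    qed
    moreover have "0 \<le> \<phi>' 0 + \<phi> 0" using init by simp
    ultimately have "0 \<le> exp (- s) * (\<phi>' s + \<phi> s)" by simp
    then show ?thesis by (simp add: zero_le_mult_iff)
  qed
  have "exp 0 * \<phi> 0 \<le> exp u * \<phi> u"
  proof (rule DERIV_nonneg_imp_nondecreasing[OF u])
    fix y :: real assume "0 \<le> y"
    then have "((\<lambda>s. exp s * \<phi> s) has_real_derivative exp y * (\<phi>' y + \<phi> y)) (at y)"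
      by (auto intro!: derivative_eq_intros \<phi> simp: algebra_simps)
    moreover have "0 \<le> exp y * (\<phi>' y + \<phi> y)"
      using deriv_add_nonneg[OF \<open>0 \<le> y\<close>] by simp
    ultimately show "\<exists>z. ((\<lambda>s. exp s * \<phi> s) has_real_derivative z) (at y) \<and> 0 \<le> z"
      by blast
  qed
  with init show ?thesis by (simp add: exp_minus field_simps)
qed

lemma exp_neg_abs_le_of_second_deriv_ge:
  fixes \<phi> \<phi>' \<phi>'' :: "real \<Rightarrow> real"
  assumes \<phi>: "\<And>t. (\<phi> has_real_derivative \<phi>' t) (at t)"
    and \<phi>': "\<And>t. (\<phi>' has_real_derivative \<phi>'' t) (at t)"
    and ge: "\<And>t. \<phi> t \<le> \<phi>'' t"
    and init: "\<phi> 0 = 1" "\<bar>\<phi>' 0\<bar> \<le> 1"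
  shows "exp (- \<bar>u\<bar>) \<le> \<phi> u"
proof (cases "0 \<le> u")
  case True
  have "exp (- u) \<le> \<phi> u"
    by (rule exp_neg_le_of_second_deriv_ge[OF \<phi> \<phi>' ge init(1)]) (use init(2) True in auto)
  with True show ?thesis
    by simp
next
  case False
  have "exp (- (- u)) \<le> \<phi> (- (- u))"
  proof (rule exp_neg_le_of_second_deriv_ge[where \<phi>' = "\<lambda>t. - \<phi>' (- t)" and \<phi>'' = "\<lambda>t. \<phi>'' (- t)"])
    show "((\<lambda>t. \<phi> (- t)) has_real_derivative - \<phi>' (- t)) (at t)" for t
      using DERIV_chain2[OF \<phi> DERIV_minus[OF DERIV_ident]] by simp
    show "((\<lambda>t. - \<phi>' (- t)) has_real_derivative \<phi>'' (- t)) (at t)" for t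
      using DERIV_minus[OF DERIV_chain2[OF \<phi>' DERIV_minus[OF DERIV_ident]]] by simp
  qed (use ge init False in auto)
  with False show ?thesis by simp
qed

lemma smooth2_has_real_derivative_snd:
  assumes "smooth2 g"
  shows "((\<lambda>t. iter_pd ds g x t) has_real_derivative iter_pd (False # ds) g x u) (at u)"
proof -
  have "(\<lambda>t. iter_pd ds g x t) differentiable (at u)"
    using assms unfolding smooth2_def by blast
  then show ?thesis
    by (simp add: DERIV_deriv_iff_real_differentiable iter_pd_def pdu_def)
qed

lemma smooth2_continuous:
  assumes "smooth2 g"
  shows "continuous_on UNIV (\<lambda>p. g (fst p) (snd p))"
proof -
  have "continuous_on UNIV (\<lambda>p. iter_pd [] g (fst p) (snd p))"
    using assms unfolding smooth2_def by blast
  then show ?thesis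
    by (simp add: iter_pd_def)
qed

lemma smooth1_continuous:
  assumes "smooth1 g"
  shows "continuous_on UNIV g"
proof -
  have "g differentiable (at x)" for x
    using assms unfolding smooth1_def by (metis funpow_0)
  then show ?thesis
    by (simp add: continuous_at_imp_continuous_on differentiable_imp_continuous_within)
qed

lemma exp_neg_abs_le_eta:
  assumes smooth: "smooth2 \<eta>"
    and pos: "\<And>x u. 0 < \<eta> x u"
    and axis: "\<And>x. \<eta> x 0 = 1"
    and scal_le: "\<And>x u. scal \<eta> x u \<le> -2"
    and curv: "\<And>x. \<bar>pdu \<eta> x 0\<bar> \<le> 1"
  shows "exp (- \<bar>u\<bar>) \<le> \<eta> x u"
proof (rule exp_neg_abs_le_of_second_deriv_ge)
  show "((\<lambda>t. \<eta> x t) has_real_derivative pdu \<eta> x t) (at t)" for t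
    using smooth2_has_real_derivative_snd[OF smooth, of "[]"] by (simp add: iter_pd_def)
  show "(pdu \<eta> x has_real_derivative pdu (pdu \<eta>) x t) (at t)" for t
    using smooth2_has_real_derivative_snd[OF smooth, of "[False]"] by (simp add: iter_pd_def)
  show "\<eta> x t \<le> pdu (pdu \<eta>) x t" for t
    using scal_le[of x t] pos[of x t] by (simp add: scal_def field_simps)
qed (use axis curv in auto)

section \<open>The metric in coordinates\<close>

definition coupling :: "nat \<Rightarrow> (nat \<Rightarrow> real \<Rightarrow> real) \<Rightarrow> real \<Rightarrow> (nat \<Rightarrow> real) \<Rightarrow> nat \<Rightarrow> real" where
  "coupling n f x v j = v (j - 1) * fext n f j x - v (j + 1) * fext n f (j + 1) x"

lemma gsq_eq:
  "gsq n \<eta> f x v dx dv = (\<eta> x (v 0) * dx)\<^sup>2 + (\<Sum>j\<le>n. (dv j + coupling n f x v j * dx)\<^sup>2)"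
  by (simp add: gsq_def coupling_def power_mult_distrib)

lemma gsq_nonneg: "0 \<le> gsq n \<eta> f x v dx dv"
  by (simp add: gsq_def sum_nonneg)

lemma sum_mult_coupling_eq_0: "(\<Sum>j\<le>n. v j * coupling n f x v j) = 0"
proof -
  define b where "b j = v (j - 1) * v j * fext n f j x" for j
  have "(\<Sum>j\<le>n. v j * coupling n f x v j) = (\<Sum>j\<le>n. b j - b (Suc j))"
    by (rule sum.cong) (auto simp: b_def coupling_def algebra_simps)
  also have "\<dots> = b 0 - b (Suc n)"
    by (rule sum_telescope)
  also have "\<dots> = 0"
    by (simp add: b_def fext_def)
  finally show ?thesis .
qed

lemma abs_coupling_le:
  assumes v: "\<And>i. i \<le> n \<Longrightarrow> \<bar>v i\<bar> \<le> B"
    and f: "\<And>i. \<bar>fext n f i x\<bar> \<le> M"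
    and "j \<le> n"
  shows "\<bar>coupling n f x v j\<bar> \<le> 2 * B * M"
proof -
  have "\<bar>v (j - 1) * fext n f j x\<bar> \<le> B * M"
    unfolding abs_mult using assms by (intro mult_mono) (auto intro: order_trans[OF abs_ge_zero])
  moreover have "\<bar>v (j + 1) * fext n f (j + 1) x\<bar> \<le> B * M"
  proof (cases "j + 1 \<le> n")
    case True
    then show ?thesis
      unfolding abs_mult using assms by (intro mult_mono) (auto intro: order_trans[OF abs_ge_zero])
  next
    case False
    have "0 \<le> B" "0 \<le> M"
      using v[of 0] f[of 0] by auto
    with False show ?thesis by (simp add: fext_def)
  qed
  ultimately show ?thesis
    unfolding coupling_def by linarith
qed

lemma abs_eta_mult_le_sqrt_gsq: "\<bar>\<eta> x (v 0)\<bar> * \<bar>dx\<bar> \<le> sqrt (gsq n \<eta> f x v dx dv)"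
proof -
  have "sqrt ((\<eta> x (v 0) * dx)\<^sup>2) \<le> sqrt (gsq n \<eta> f x v dx dv)"
    unfolding gsq_eq by (rule real_sqrt_le_mono) (simp add: sum_nonneg)
  then show ?thesis
    by (simp add: abs_mult)
qed

lemma abs_connection_le_sqrt_gsq:
  assumes "j \<le> n"
  shows "\<bar>dv j + coupling n f x v j * dx\<bar> \<le> sqrt (gsq n \<eta> f x v dx dv)"
proof -
  have "(dv j + coupling n f x v j * dx)\<^sup>2 \<le> (\<Sum>j\<le>n. (dv j + coupling n f x v j * dx)\<^sup>2)"
    using assms by (intro member_le_sum) auto
  then have "sqrt ((dv j + coupling n f x v j * dx)\<^sup>2) \<le> sqrt (gsq n \<eta> f x v dx dv)"
    unfolding gsq_eq by (intro real_sqrt_le_mono) (simp add: add_increasing)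
  then show ?thesis
    by simp
qed

lemma abs_sum_mult_le_sqrt_gsq:
  "\<bar>\<Sum>j\<le>n. v j * dv j\<bar> \<le> sqrt (\<Sum>j\<le>n. (v j)\<^sup>2) * sqrt (gsq n \<eta> f x v dx dv)"
proof -
  define w where "w j = dv j + coupling n f x v j * dx" for j
  have "(\<Sum>j\<le>n. v j * w j) = (\<Sum>j\<le>n. v j * dv j) + dx * (\<Sum>j\<le>n. v j * coupling n f x v j)"
    by (simp add: w_def algebra_simps sum.distrib sum_distrib_left)
  then have "(\<Sum>j\<le>n. v j * dv j) = (\<Sum>j\<le>n. v j * w j)"
    by (simp add: sum_mult_coupling_eq_0)
  also have "\<bar>\<dots>\<bar> \<le> sqrt (\<Sum>j\<le>n. (v j)\<^sup>2) * sqrt (\<Sum>j\<le>n. (w j)\<^sup>2)"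
    using real_sqrt_le_mono[OF Cauchy_Schwarz_ineq_sum[of v w "{..n}"]]
    by (simp add: real_sqrt_mult)
  also have "\<dots> \<le> sqrt (\<Sum>j\<le>n. (v j)\<^sup>2) * sqrt (gsq n \<eta> f x v dx dv)"
    unfolding gsq_eq w_def by (intro mult_left_mono real_sqrt_le_mono) (auto simp: sum_nonneg)
  finally show ?thesis .
qed

lemma sqrt_gsq_le:
  "sqrt (gsq n \<eta> f x v dx dv)
     \<le> \<bar>\<eta> x (v 0)\<bar> * \<bar>dx\<bar> + (\<Sum>j\<le>n. \<bar>dv j\<bar> + \<bar>coupling n f x v j\<bar> * \<bar>dx\<bar>)"
proof -
  define w where "w j = dv j + coupling n f x v j * dx" for j
  have "sqrt (gsq n \<eta> f x v dx dv) \<le> sqrt ((\<eta> x (v 0) * dx)\<^sup>2) + sqrt (\<Sum>j\<le>n. (w j)\<^sup>2)"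
    unfolding gsq_eq w_def by (rule sqrt_add_le_add_sqrt) (auto simp: sum_nonneg)
  also have "sqrt (\<Sum>j\<le>n. (w j)\<^sup>2) \<le> (\<Sum>j\<le>n. \<bar>w j\<bar>)"
    using L2_set_le_sum_abs[of w "{..n}"] by (simp add: L2_set_def)
  also have "\<dots> \<le> (\<Sum>j\<le>n. \<bar>dv j\<bar> + \<bar>coupling n f x v j\<bar> * \<bar>dx\<bar>)"
    unfolding w_def by (intro sum_mono order_trans[OF abs_triangle_ineq]) (simp add: abs_mult)
  finally show ?thesis
    by (simp add: abs_mult)
qed

lemma abs_dx_le_sqrt_gsq:
  assumes "exp (- B) \<le> \<eta> x (v 0)"
  shows "\<bar>dx\<bar> \<le> exp B * sqrt (gsq n \<eta> f x v dx dv)"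
proof -
  have "exp (- B) * \<bar>dx\<bar> \<le> \<bar>\<eta> x (v 0)\<bar> * \<bar>dx\<bar>"
    using assms by (intro mult_right_mono) auto
  also have "\<dots> \<le> sqrt (gsq n \<eta> f x v dx dv)"
    by (rule abs_eta_mult_le_sqrt_gsq)
  finally show ?thesis
    by (simp add: exp_minus field_simps)
qed

lemma abs_dv_le_sqrt_gsq:
  assumes "\<And>i. i \<le> n \<Longrightarrow> \<bar>v i\<bar> \<le> B" "\<And>i. \<bar>fext n f i x\<bar> \<le> M" "j \<le> n"
  shows "\<bar>dv j\<bar> \<le> sqrt (gsq n \<eta> f x v dx dv) + 2 * B * M * \<bar>dx\<bar>"
proof -
  have "\<bar>dv j\<bar> \<le> \<bar>dv j + coupling n f x v j * dx\<bar> + \<bar>coupling n f x v j\<bar> * \<bar>dx\<bar>"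
    by (simp add: abs_mult[symmetric] abs_triangle_ineq4[of "dv j + coupling n f x v j * dx", simplified])
  moreover have "\<bar>coupling n f x v j\<bar> * \<bar>dx\<bar> \<le> 2 * B * M * \<bar>dx\<bar>"
    using abs_coupling_le[OF assms] by (intro mult_right_mono) auto
  ultimately show ?thesis
    using abs_connection_le_sqrt_gsq[OF assms(3), of dv f x v dx \<eta>] by linarith
qed

lemma continuous_on_fext:
  assumes "\<And>j. 1 \<le> j \<Longrightarrow> j \<le> n \<Longrightarrow> continuous_on UNIV (f j)"
  shows "continuous_on UNIV (fext n f j)"
  using assms by (simp add: fext_def)

lemma fext_bounded:
  assumes f_cont: "\<And>j. 1 \<le> j \<Longrightarrow> j \<le> n \<Longrightarrow> continuous_on UNIV (f j)"
  obtains M where "\<And>j x. \<bar>x\<bar> \<le> R \<Longrightarrow> \<bar>fext n f j x\<bar> \<le> M"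
proof -
  have "continuous_on UNIV (\<lambda>x. \<Sum>i=1..n. \<bar>f i x\<bar>)"
    using f_cont by (intro continuous_intros) auto
  then obtain M where M: "\<And>x. x \<in> {-R..R} \<Longrightarrow> norm (\<Sum>i=1..n. \<bar>f i x\<bar>) \<le> M"
    using continuous_on_compact_bound[OF compact_Icc continuous_on_subset] by blast
  have "\<bar>fext n f j x\<bar> \<le> M" if "\<bar>x\<bar> \<le> R" for j x
  proof -
    have "\<bar>fext n f j x\<bar> \<le> (\<Sum>i=1..n. \<bar>f i x\<bar>)"
      by (auto simp: fext_def sum_nonneg intro: member_le_sum)
    also have "\<dots> \<le> M"
      using M[of x] that by (simp add: abs_le_iff)
    finally show ?thesis .
  qed
  then show ?thesis
    using that by blast
qed

lemma continuous_bounded_on_square: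
  fixes g :: "real \<Rightarrow> real \<Rightarrow> real"
  assumes "continuous_on UNIV (\<lambda>p. g (fst p) (snd p))"
  obtains E :: real where "\<And>x u. \<bar>x\<bar> \<le> R \<Longrightarrow> \<bar>u\<bar> \<le> R \<Longrightarrow> \<bar>g x u\<bar> \<le> E"
proof -
  obtain E where E: "\<And>p. p \<in> {-R..R} \<times> {-R..R} \<Longrightarrow> norm (g (fst p) (snd p)) \<le> E"
    using continuous_on_compact_bound[OF compact_Times[OF compact_Icc compact_Icc]
        continuous_on_subset[OF assms subset_UNIV]] by metis
  show ?thesis
  proof (rule that)
    fix x u :: real assume "\<bar>x\<bar> \<le> R" "\<bar>u\<bar> \<le> R"
    then show "\<bar>g x u\<bar> \<le> E"
      using E[of "(x, u)"] by (simp add: abs_le_iff)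
  qed
qed

section \<open>Curves\<close>

lemma abs_diff_le_integral:
  fixes h h' G :: "real \<Rightarrow> real"
  assumes s: "a \<le> s" "s \<le> b"
    and h: "\<And>t. t \<in> {a..b} \<Longrightarrow> (h has_real_derivative h' t) (at t)"
    and le: "\<And>t. t \<in> {a..b} \<Longrightarrow> \<bar>h' t\<bar> \<le> G t"
    and G: "G integrable_on {a..b}"
    and G_nonneg: "\<And>t. t \<in> {a..b} \<Longrightarrow> 0 \<le> G t"
  shows "\<bar>h s - h a\<bar> \<le> integral {a..b} G"
proof -
  have sub: "{a..s} \<subseteq> {a..b}"
    using s by auto
  have "(h' has_integral (h s - h a)) {a..s}"
  proof (rule fundamental_theorem_of_calculus[OF s(1)])
    fix t assume "t \<in> {a..s}"
    with sub h show "(h has_vector_derivative h' t) (at t within {a..s})"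
      by (auto simp: has_real_derivative_iff_has_vector_derivative intro: has_vector_derivative_at_within)
  qed
  moreover have "G integrable_on {a..s}"
    using G sub by (rule integrable_on_subinterval)
  ultimately have "\<bar>h s - h a\<bar> \<le> integral {a..s} G"
    using integral_norm_bound_integral[of h' "{a..s}" G] le sub
    by (auto simp: integral_unique has_integral_integrable)
  also have "\<dots> \<le> integral {a..b} G"
    using integral_subset_le[OF sub \<open>G integrable_on {a..s}\<close> G] G_nonneg by blast
  finally show ?thesis .
qed

lemma adm_curve_has_real_derivative:
  assumes "adm_curve n X V" "t \<in> {0..1}"
  shows "(X has_real_derivative vector_derivative X (at t)) (at t)"
    and "j \<le> n \<Longrightarrow> (V j has_real_derivative vector_derivative (V j) (at t)) (at t)"
  using assms
  by (auto simp: adm_curve_def C1_differentiable_on_eq has_real_derivative_iff_has_vector_derivative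
      vector_derivative_works[symmetric])

definition curve_speed :: "nat \<Rightarrow> (real \<Rightarrow> real \<Rightarrow> real) \<Rightarrow> (nat \<Rightarrow> real \<Rightarrow> real)
    \<Rightarrow> (real \<Rightarrow> real) \<Rightarrow> (nat \<Rightarrow> real \<Rightarrow> real) \<Rightarrow> real \<Rightarrow> real" where
  "curve_speed n \<eta> f X V t = sqrt (gsq n \<eta> f (X t) (\<lambda>j. V j t)
     (vector_derivative X (at t)) (\<lambda>j. vector_derivative (V j) (at t)))"

lemma curve_length_eq: "curve_length n \<eta> f X V = integral {0..1} (curve_speed n \<eta> f X V)"
  by (simp add: curve_length_def curve_speed_def[abs_def])

lemma curve_speed_nonneg: "0 \<le> curve_speed n \<eta> f X V t"
  by (simp add: curve_speed_def gsq_nonneg)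

lemma curve_length_nonneg: "0 \<le> curve_length n \<eta> f X V"
  unfolding curve_length_eq
  by (cases "curve_speed n \<eta> f X V integrable_on {0..1}")
    (auto intro: integral_nonneg curve_speed_nonneg simp: not_integrable_integral)

lemma continuous_on_mult_fext:
  assumes f_cont: "\<And>j. 1 \<le> j \<Longrightarrow> j \<le> n \<Longrightarrow> continuous_on UNIV (f j)"
    and X: "continuous_on S X"
    and g: "1 \<le> i \<Longrightarrow> i \<le> n \<Longrightarrow> continuous_on S g"
  shows "continuous_on S (\<lambda>t. g t * fext n f i (X t))"
proof (cases "1 \<le> i \<and> i \<le> n")
  case True
  have "continuous_on S (\<lambda>t. fext n f i (X t))"
    using continuous_on_compose2[OF continuous_on_fext[OF f_cont] X] by simp
  with True g show ?thesis
    by (intro continuous_on_mult) auto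
next
  case False
  then have "fext n f i = (\<lambda>_. 0)"
    by (auto simp: fext_def)
  then show ?thesis
    by simp
qed

lemma continuous_on_curve_speed:
  assumes eta_cont: "continuous_on UNIV (\<lambda>p. \<eta> (fst p) (snd p))"
    and f_cont: "\<And>j. 1 \<le> j \<Longrightarrow> j \<le> n \<Longrightarrow> continuous_on UNIV (f j)"
    and adm: "adm_curve n X V"
  shows "continuous_on {0..1} (curve_speed n \<eta> f X V)"
proof -
  have X: "continuous_on {0..1} X" "continuous_on {0..1} (\<lambda>t. vector_derivative X (at t))"
    and V: "\<And>j. j \<le> n \<Longrightarrow> continuous_on {0..1} (V j)"
      "\<And>j. j \<le> n \<Longrightarrow> continuous_on {0..1} (\<lambda>t. vector_derivative (V j) (at t))"
    using adm by (auto simp: adm_curve_def C1_differentiable_imp_continuous_on C1_differentiable_on_eq)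
  have "continuous_on {0..1} (\<lambda>t. \<eta> (X t) (V 0 t))"
    using continuous_on_compose2[OF eta_cont, of "{0..1}" "\<lambda>t. (X t, V 0 t)"] X V
    by (auto intro!: continuous_intros)
  moreover have "continuous_on {0..1} (\<lambda>t. coupling n f (X t) (\<lambda>j. V j t) j)" if "j \<le> n" for j
    unfolding coupling_def using that X V
    by (intro continuous_intros continuous_on_mult_fext[OF f_cont]) auto
  ultimately show ?thesis
    unfolding curve_speed_def[abs_def] gsq_eq using X V
    by (intro continuous_intros) (auto simp: sum_nonneg)
qed

lemma abs_diff_le_curve_length:
  assumes eta_cont: "continuous_on UNIV (\<lambda>p. \<eta> (fst p) (snd p))"
    and f_cont: "\<And>j. 1 \<le> j \<Longrightarrow> j \<le> n \<Longrightarrow> continuous_on UNIV (f j)"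
    and adm: "adm_curve n X V"
    and h: "\<And>t. t \<in> {0..1} \<Longrightarrow> (h has_real_derivative h' t) (at t)"
    and le: "\<And>t. t \<in> {0..1} \<Longrightarrow> \<bar>h' t\<bar> \<le> c * curve_speed n \<eta> f X V t"
    and "0 \<le> c" "s \<in> {0..1}"
  shows "\<bar>h s - h 0\<bar> \<le> c * curve_length n \<eta> f X V"
proof -
  have "curve_speed n \<eta> f X V integrable_on {0..1}"
    using continuous_on_curve_speed[OF eta_cont f_cont adm] by (rule integrable_continuous_interval)
  then have "\<bar>h s - h 0\<bar> \<le> integral {0..1} (\<lambda>t. c * curve_speed n \<eta> f X V t)"
    using assms
    by (intro abs_diff_le_integral[OF _ _ h le] integrable_on_mult_right)
      (auto intro: mult_nonneg_nonneg curve_speed_nonneg)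
  then show ?thesis
    by (simp add: curve_length_eq)
qed

text \<open>The coupling is orthogonal to \<open>v\<close> (\<open>sum_mult_coupling_eq_0\<close>), so it does not
  contribute to the radial derivative of \<open>v\<close>, which is therefore bounded by the speed.\<close>
lemma curve_fibre_norm_le:
  assumes eta_cont: "continuous_on UNIV (\<lambda>p. \<eta> (fst p) (snd p))"
    and f_cont: "\<And>j. 1 \<le> j \<Longrightarrow> j \<le> n \<Longrightarrow> continuous_on UNIV (f j)"
    and adm: "adm_curve n X V"
    and s: "s \<in> {0..1}"
  shows "sqrt ((\<Sum>j\<le>n. (V j s)\<^sup>2) + 1) \<le> sqrt ((\<Sum>j\<le>n. (V j 0)\<^sup>2) + 1) + curve_length n \<eta> f X V"
proof -
  define N where "N t = (\<Sum>j\<le>n. (V j t)\<^sup>2) + 1" for t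
  define DV where "DV j t = vector_derivative (V j) (at t)" for j t
  have N_pos: "0 < N t" for t
    by (simp add: N_def add_nonneg_pos sum_nonneg)
  have dV: "(V j has_real_derivative DV j t) (at t)" if "j \<le> n" "t \<in> {0..1}" for j t
    unfolding DV_def using adm_curve_has_real_derivative(2)[OF adm that(2,1)] .
  have "\<bar>sqrt (N s) - sqrt (N 0)\<bar> \<le> 1 * curve_length n \<eta> f X V"
  proof (rule abs_diff_le_curve_length[OF eta_cont f_cont adm])
    fix t :: real assume t: "t \<in> {0..1}"
    show "((\<lambda>t. sqrt (N t)) has_real_derivative (\<Sum>j\<le>n. V j t * DV j t) / sqrt (N t)) (at t)"
      unfolding N_def using N_pos[of t] dV[OF _ t]
      by (auto intro!: derivative_eq_intros simp: N_def sum_distrib_left sum_distrib_right field_simps)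
    have "\<bar>\<Sum>j\<le>n. V j t * DV j t\<bar> \<le> sqrt (N t) * curve_speed n \<eta> f X V t"
      using abs_sum_mult_le_sqrt_gsq[where v = "\<lambda>j. V j t" and dv = "\<lambda>j. DV j t"
          and \<eta> = \<eta> and f = f and x = "X t" and dx = "vector_derivative X (at t)"]
      unfolding curve_speed_def DV_def N_def
      by (rule order_trans) (intro mult_right_mono; simp add: gsq_nonneg)
    then show "\<bar>(\<Sum>j\<le>n. V j t * DV j t) / sqrt (N t)\<bar> \<le> 1 * curve_speed n \<eta> f X V t"
      using N_pos[of t] by (simp add: divide_le_eq mult.commute)
  qed (use s in auto)
  then show ?thesis
    unfolding N_def by linarith
qed

section \<open>The distance versus the coordinate norm\<close>

definition curve_joins :: "nat \<Rightarrow> (real \<Rightarrow> real) \<Rightarrow> (nat \<Rightarrow> real \<Rightarrow> real)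
    \<Rightarrow> real \<times> (nat \<Rightarrow> real) \<Rightarrow> real \<times> (nat \<Rightarrow> real) \<Rightarrow> bool" where
  "curve_joins n X V p q \<longleftrightarrow> adm_curve n X V \<and> X 0 = fst p \<and> X 1 = fst q \<and>
     (\<forall>j\<le>n. V j 0 = snd p j \<and> V j 1 = snd q j)"

lemma rdist_eq_Inf: "rdist n \<eta> f p q = Inf {curve_length n \<eta> f X V | X V. curve_joins n X V p q}"
  by (simp add: rdist_def curve_joins_def)

lemma has_vector_derivative_line:
  fixes a b :: real
  shows "((\<lambda>t. a + t * (b - a)) has_vector_derivative (b - a)) (at t)"
  unfolding has_real_derivative_iff_has_vector_derivative[symmetric]
  by (auto intro!: derivative_eq_intros)

lemma vector_derivative_line: "vector_derivative (\<lambda>t. a + t * (b - a)) (at t) = b - (a :: real)"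
  by (rule vector_derivative_at[OF has_vector_derivative_line])

lemma C1_differentiable_on_line: "(\<lambda>t. a + t * (b - a)) C1_differentiable_on S"
  for a b :: real
  unfolding C1_differentiable_on_def using has_vector_derivative_line
  by (intro exI[of _ "\<lambda>_. b - a"]) auto

lemma curve_joins_line:
  "curve_joins n (\<lambda>t. fst p + t * (fst q - fst p)) (\<lambda>j t. snd p j + t * (snd q j - snd p j)) p q"
  by (simp add: curve_joins_def adm_curve_def C1_differentiable_on_line)

lemma rdist_le_curve_length:
  assumes "curve_joins n X V p q"
  shows "rdist n \<eta> f p q \<le> curve_length n \<eta> f X V"
  unfolding rdist_eq_Inf
  by (rule cInf_lower) (use assms in \<open>auto intro!: exI[of _ 0] curve_length_nonneg simp: bdd_below_def\<close>)

lemma rdist_nonneg: "0 \<le> rdist n \<eta> f p q"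
  unfolding rdist_eq_Inf
  by (rule cInf_greatest) (use curve_joins_line curve_length_nonneg in blast)+

lemma rdist_less_imp_curve:
  assumes "rdist n \<eta> f p q < e"
  obtains X V where "curve_joins n X V p q" "curve_length n \<eta> f X V < e"
  using cInf_lessD[OF _ assms[unfolded rdist_eq_Inf]] curve_joins_line by blast

definition coord_norm :: "nat \<Rightarrow> real \<times> (nat \<Rightarrow> real) \<Rightarrow> real" where
  "coord_norm n p = \<bar>fst p\<bar> + (\<Sum>j\<le>n. \<bar>snd p j\<bar>)"

lemma coord_norm_nonneg: "0 \<le> coord_norm n p"
  by (simp add: coord_norm_def sum_nonneg)

lemma abs_fst_le_coord_norm: "\<bar>fst p\<bar> \<le> coord_norm n p"
  by (simp add: coord_norm_def sum_nonneg)

lemma abs_snd_le_coord_norm: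
  assumes "j \<le> n"
  shows "\<bar>snd p j\<bar> \<le> coord_norm n p"
proof -
  have "\<bar>snd p j\<bar> \<le> (\<Sum>j\<le>n. \<bar>snd p j\<bar>)"
    using assms by (intro member_le_sum) auto
  then show ?thesis
    by (simp add: coord_norm_def)
qed

lemma coord_norm_le_diff_add: "coord_norm n p \<le> coord_norm n (p - q) + coord_norm n q"
proof -
  have triangle: "\<bar>a\<bar> \<le> \<bar>a - b\<bar> + \<bar>b\<bar>" for a b :: real
    by arith
  have "(\<Sum>j\<le>n. \<bar>snd p j\<bar>) \<le> (\<Sum>j\<le>n. \<bar>snd p j - snd q j\<bar>) + (\<Sum>j\<le>n. \<bar>snd q j\<bar>)"
    by (simp add: sum.distrib[symmetric] sum_mono triangle)
  then show ?thesis
    using triangle[of "fst p" "fst q"] by (simp add: coord_norm_def)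
qed

lemma curve_fibre_coord_le:
  assumes eta_cont: "continuous_on UNIV (\<lambda>p. \<eta> (fst p) (snd p))"
    and f_cont: "\<And>j. 1 \<le> j \<Longrightarrow> j \<le> n \<Longrightarrow> continuous_on UNIV (f j)"
    and adm: "adm_curve n X V"
    and start: "\<And>i. i \<le> n \<Longrightarrow> \<bar>V i 0\<bar> \<le> R"
    and L: "curve_length n \<eta> f X V \<le> 1"
    and "j \<le> n" "t \<in> {0..1}"
  shows "\<bar>V j t\<bar> \<le> sqrt ((real n + 1) * R\<^sup>2 + 1) + 1"
proof -
  have "(V j t)\<^sup>2 \<le> (\<Sum>i\<le>n. (V i t)\<^sup>2) + 1"
    using member_le_sum[of j "{..n}" "\<lambda>i. (V i t)\<^sup>2"] \<open>j \<le> n\<close> by simp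
  then have "\<bar>V j t\<bar> \<le> sqrt ((\<Sum>i\<le>n. (V i t)\<^sup>2) + 1)"
    using real_sqrt_le_mono by fastforce
  also have "\<dots> \<le> sqrt ((\<Sum>i\<le>n. (V i 0)\<^sup>2) + 1) + curve_length n \<eta> f X V"
    by (rule curve_fibre_norm_le[OF eta_cont f_cont adm \<open>t \<in> {0..1}\<close>])
  also have "(\<Sum>i\<le>n. (V i 0)\<^sup>2) \<le> (\<Sum>i\<le>n. R\<^sup>2)"
    using start by (intro sum_mono) (force simp: abs_le_square_iff[symmetric])
  finally show ?thesis
    using L by (simp add: algebra_simps)
qed

lemma curve_stays_in_box:
  assumes eta_low: "\<And>x u. exp (- \<bar>u\<bar>) \<le> \<eta> x u"
    and eta_cont: "continuous_on UNIV (\<lambda>p. \<eta> (fst p) (snd p))"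
    and f_cont: "\<And>j. 1 \<le> j \<Longrightarrow> j \<le> n \<Longrightarrow> continuous_on UNIV (f j)"
    and adm: "adm_curve n X V"
    and start: "\<bar>X 0\<bar> \<le> R" "\<And>i. i \<le> n \<Longrightarrow> \<bar>V i 0\<bar> \<le> R"
    and L: "curve_length n \<eta> f X V \<le> 1"
    and B: "sqrt ((real n + 1) * R\<^sup>2 + 1) + 1 \<le> B"
    and t: "t \<in> {0..1}"
  shows "\<And>j. j \<le> n \<Longrightarrow> \<bar>V j t\<bar> \<le> B"
    and "\<bar>vector_derivative X (at t)\<bar> \<le> exp B * curve_speed n \<eta> f X V t"
    and "\<bar>X t\<bar> \<le> R + exp B"
proof -
  have V_le: "\<bar>V j s\<bar> \<le> B" if "j \<le> n" "s \<in> {0..1}" for j s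
    using curve_fibre_coord_le[OF eta_cont f_cont adm start(2) L that] B by linarith
  have DX_le: "\<bar>vector_derivative X (at s)\<bar> \<le> exp B * curve_speed n \<eta> f X V s"
    if "s \<in> {0..1}" for s
  proof -
    have "exp (- B) \<le> exp (- \<bar>V 0 s\<bar>)"
      using V_le[of 0 s] that by simp
    also have "\<dots> \<le> \<eta> (X s) (V 0 s)"
      by (rule eta_low)
    finally show ?thesis
      unfolding curve_speed_def by (rule abs_dx_le_sqrt_gsq)
  qed
  have "\<bar>X t - X 0\<bar> \<le> exp B * curve_length n \<eta> f X V"
    by (rule abs_diff_le_curve_length[OF eta_cont f_cont adm adm_curve_has_real_derivative(1)[OF adm] DX_le])
      (use t in auto)
  also have "\<dots> \<le> exp B"
    using L by simp
  finally show "\<bar>X t\<bar> \<le> R + exp B"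
    using start(1) by linarith
  show "\<And>j. j \<le> n \<Longrightarrow> \<bar>V j t\<bar> \<le> B"
    using V_le t by blast
  show "\<bar>vector_derivative X (at t)\<bar> \<le> exp B * curve_speed n \<eta> f X V t"
    using DX_le t by blast
qed

lemma curve_abs_dv_le:
  assumes eta_low: "\<And>x u. exp (- \<bar>u\<bar>) \<le> \<eta> x u"
    and eta_cont: "continuous_on UNIV (\<lambda>p. \<eta> (fst p) (snd p))"
    and f_cont: "\<And>j. 1 \<le> j \<Longrightarrow> j \<le> n \<Longrightarrow> continuous_on UNIV (f j)"
    and adm: "adm_curve n X V"
    and start: "\<bar>X 0\<bar> \<le> R" "\<And>i. i \<le> n \<Longrightarrow> \<bar>V i 0\<bar> \<le> R"
    and L: "curve_length n \<eta> f X V \<le> 1"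
    and B: "sqrt ((real n + 1) * R\<^sup>2 + 1) + 1 \<le> B"
    and M: "\<And>j x. \<bar>x\<bar> \<le> R + exp B \<Longrightarrow> \<bar>fext n f j x\<bar> \<le> M"
    and "j \<le> n" "t \<in> {0..1}"
  shows "\<bar>vector_derivative (V j) (at t)\<bar> \<le> (1 + 2 * B * M * exp B) * curve_speed n \<eta> f X V t"
proof -
  note box = curve_stays_in_box[OF eta_low eta_cont f_cont adm start L B \<open>t \<in> {0..1}\<close>]
  have "0 \<le> B" "0 \<le> M"
    using box(1)[of 0] M[OF box(3), of 0] by (auto simp: fext_def)
  have "\<bar>vector_derivative (V j) (at t)\<bar>
      \<le> curve_speed n \<eta> f X V t + 2 * B * M * \<bar>vector_derivative X (at t)\<bar>"
    unfolding curve_speed_def using box(1) M[OF box(3)] \<open>j \<le> n\<close> by (rule abs_dv_le_sqrt_gsq)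
  also have "\<dots> \<le> curve_speed n \<eta> f X V t + 2 * B * M * (exp B * curve_speed n \<eta> f X V t)"
    using box(2) \<open>0 \<le> B\<close> \<open>0 \<le> M\<close> by (intro add_left_mono mult_left_mono) auto
  finally show ?thesis
    by (simp add: algebra_simps)
qed

lemma curve_displacement_le:
  assumes eta_low: "\<And>x u. exp (- \<bar>u\<bar>) \<le> \<eta> x u"
    and eta_cont: "continuous_on UNIV (\<lambda>p. \<eta> (fst p) (snd p))"
    and f_cont: "\<And>j. 1 \<le> j \<Longrightarrow> j \<le> n \<Longrightarrow> continuous_on UNIV (f j)"
    and joins: "curve_joins n X V p q"
    and p: "coord_norm n p \<le> R"
    and L: "curve_length n \<eta> f X V \<le> 1"
    and B: "sqrt ((real n + 1) * R\<^sup>2 + 1) + 1 \<le> B"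
    and M: "\<And>j x. \<bar>x\<bar> \<le> R + exp B \<Longrightarrow> \<bar>fext n f j x\<bar> \<le> M"
  shows "coord_norm n (q - p)
    \<le> (real n + 2) * (exp B + 1 + 2 * B * M * exp B) * curve_length n \<eta> f X V"
proof -
  let ?L = "curve_length n \<eta> f X V" and ?speed = "curve_speed n \<eta> f X V"
  define c where "c = exp B + 1 + 2 * B * M * exp B"
  have adm: "adm_curve n X V" and ends: "X 0 = fst p" "X 1 = fst q"
    "\<And>j. j \<le> n \<Longrightarrow> V j 0 = snd p j \<and> V j 1 = snd q j"
    using joins by (auto simp: curve_joins_def)
  have start: "\<bar>X 0\<bar> \<le> R" "\<And>i. i \<le> n \<Longrightarrow> \<bar>V i 0\<bar> \<le> R"
    using abs_fst_le_coord_norm[of p n] abs_snd_le_coord_norm[of _ n p] p ends by force+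
  have dx: "\<bar>vector_derivative X (at t)\<bar> \<le> exp B * ?speed t" if "t \<in> {0..1}" for t
    by (rule curve_stays_in_box(2)[OF eta_low eta_cont f_cont adm start L B that])
  have dv: "\<bar>vector_derivative (V j) (at t)\<bar> \<le> (1 + 2 * B * M * exp B) * ?speed t"
    if "j \<le> n" "t \<in> {0..1}" for j t
    by (rule curve_abs_dv_le[OF eta_low eta_cont f_cont adm start L B M that])
  have "0 \<le> sqrt ((real n + 1) * R\<^sup>2 + 1)"
    by (intro real_sqrt_ge_zero add_nonneg_nonneg mult_nonneg_nonneg) auto
  with B have "0 \<le> B"
    by linarith
  moreover have "0 \<le> M"
    using M[of "X 0" 0] start(1) exp_gt_zero[of B] by (simp add: fext_def)
  ultimately have c: "exp B \<le> c" "1 + 2 * B * M * exp B \<le> c" "0 \<le> c"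
    by (auto simp: c_def)
  have speed_mono: "a * ?speed t \<le> c * ?speed t" if "a \<le> c" for a t
    using that curve_speed_nonneg by (rule mult_right_mono)
  have "\<bar>X 1 - X 0\<bar> \<le> c * ?L"
  proof (rule abs_diff_le_curve_length[OF eta_cont f_cont adm adm_curve_has_real_derivative(1)[OF adm]])
    show "\<bar>vector_derivative X (at t)\<bar> \<le> c * ?speed t" if "t \<in> {0..1}" for t
      using dx[OF that] speed_mono[OF c(1)] by (rule order_trans)
  qed (use c in auto)
  moreover have "\<bar>V j 1 - V j 0\<bar> \<le> c * ?L" if "j \<le> n" for j
  proof (rule abs_diff_le_curve_length[OF eta_cont f_cont adm adm_curve_has_real_derivative(2)[OF adm _ that]])
    show "\<bar>vector_derivative (V j) (at t)\<bar> \<le> c * ?speed t" if "t \<in> {0..1}" for t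
      using dv[OF \<open>j \<le> n\<close> that] speed_mono[OF c(2)] by (rule order_trans)
  qed (use c in auto)
  ultimately have "coord_norm n (q - p) \<le> c * ?L + (\<Sum>j\<le>n. c * ?L)"
    unfolding coord_norm_def using ends by (intro add_mono sum_mono) auto
  then show ?thesis
    by (simp add: c_def algebra_simps)
qed

lemma rdist_less_imp_coord_norm_le:
  assumes eta_low: "\<And>x u. exp (- \<bar>u\<bar>) \<le> \<eta> x u"
    and eta_cont: "continuous_on UNIV (\<lambda>p. \<eta> (fst p) (snd p))"
    and f_cont: "\<And>j. 1 \<le> j \<Longrightarrow> j \<le> n \<Longrightarrow> continuous_on UNIV (f j)"
  shows "\<exists>C. \<forall>p q e. coord_norm n p \<le> R \<longrightarrow> rdist n \<eta> f p q < e \<longrightarrow> e \<le> 1 \<longrightarrow>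
      coord_norm n (q - p) \<le> C * e"
proof -
  define B where "B = sqrt ((real n + 1) * R\<^sup>2 + 1) + 1"
  obtain M where M: "\<And>j x. \<bar>x\<bar> \<le> R + exp B \<Longrightarrow> \<bar>fext n f j x\<bar> \<le> M"
    using fext_bounded[where n = n and f = f, OF f_cont] by blast
  define C where "C = (real n + 2) * (exp B + 1 + 2 * B * M * exp B)"
  have "coord_norm n (q - p) \<le> C * e"
    if p: "coord_norm n p \<le> R" and pq: "rdist n \<eta> f p q < e" and e: "e \<le> 1" for p q e
  proof -
    obtain X V where joins: "curve_joins n X V p q" and L: "curve_length n \<eta> f X V < e"
      using rdist_less_imp_curve[OF pq] .
    have R: "0 \<le> R"
      using p coord_norm_nonneg[of n p] by linarith
    then have "0 \<le> M"
      using M[of 0 0] by (simp add: fext_def)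
    with R have "0 \<le> C"
      by (simp add: C_def B_def)
    have "coord_norm n (q - p) \<le> C * curve_length n \<eta> f X V"
      unfolding C_def using L e
      by (intro curve_displacement_le[OF eta_low eta_cont f_cont joins p _ _ M]) (auto simp: B_def)
    also have "\<dots> \<le> C * e"
      using \<open>0 \<le> C\<close> L by (intro mult_left_mono) auto
    finally show ?thesis .
  qed
  then show ?thesis
    by blast
qed

lemma abs_convex_comb_le:
  fixes a b t :: real
  assumes "\<bar>a\<bar> \<le> R" "\<bar>b\<bar> \<le> R" "t \<in> {0..1}"
  shows "\<bar>a + t * (b - a)\<bar> \<le> R"
proof -
  have "\<bar>(1 - t) * a + t * b\<bar> \<le> (1 - t) * \<bar>a\<bar> + t * \<bar>b\<bar>"
    using assms(3) abs_triangle_ineq[of "(1 - t) * a" "t * b"] by (simp add: abs_mult)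
  also have "\<dots> \<le> (1 - t) * R + t * R"
    using assms by (intro add_mono mult_left_mono) auto
  finally show ?thesis
    by (simp add: algebra_simps)
qed

lemma line_curve_speed_le:
  assumes E: "\<And>x u. \<bar>x\<bar> \<le> R \<Longrightarrow> \<bar>u\<bar> \<le> R \<Longrightarrow> \<bar>\<eta> x u\<bar> \<le> E"
    and M: "\<And>j x. \<bar>x\<bar> \<le> R \<Longrightarrow> \<bar>fext n f j x\<bar> \<le> M"
    and p: "coord_norm n p \<le> R" and q: "coord_norm n q \<le> R"
    and t: "t \<in> {0..1}"
  shows "curve_speed n \<eta> f (\<lambda>t. fst p + t * (fst q - fst p)) (\<lambda>j t. snd p j + t * (snd q j - snd p j)) t
    \<le> (E + 1 + (real n + 1) * (2 * R * M)) * coord_norm n (q - p)"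
proof -
  define X where "X t = fst p + t * (fst q - fst p)" for t
  define V where "V j t = snd p j + t * (snd q j - snd p j)" for j t
  define \<Delta> where "\<Delta> = coord_norm n (q - p)"
  have R: "0 \<le> R"
    using p coord_norm_nonneg[of n p] by linarith
  then have "0 \<le> E" "0 \<le> M"
    using E[of 0 0] M[of 0 0] by (auto simp: fext_def)
  have \<Delta>: "\<bar>fst q - fst p\<bar> \<le> \<Delta>" "(\<Sum>j\<le>n. \<bar>snd q j - snd p j\<bar>) \<le> \<Delta>"
    by (auto simp: \<Delta>_def coord_norm_def sum_nonneg)
  have X_box: "\<bar>X t\<bar> \<le> R" and V_box: "\<And>j. j \<le> n \<Longrightarrow> \<bar>V j t\<bar> \<le> R"
    unfolding X_def V_def using p q t
    by (auto intro!: abs_convex_comb_le abs_fst_le_coord_norm abs_snd_le_coord_norm intro: order_trans)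
  have "curve_speed n \<eta> f X V t
      \<le> \<bar>\<eta> (X t) (V 0 t)\<bar> * \<bar>fst q - fst p\<bar>
        + (\<Sum>j\<le>n. \<bar>snd q j - snd p j\<bar> + \<bar>coupling n f (X t) (\<lambda>j. V j t) j\<bar> * \<bar>fst q - fst p\<bar>)"
    using sqrt_gsq_le by (simp add: curve_speed_def X_def[abs_def] V_def[abs_def] vector_derivative_line)
  also have "\<dots> \<le> E * \<Delta> + (\<Sum>j\<le>n. \<bar>snd q j - snd p j\<bar> + 2 * R * M * \<Delta>)"
    using E[OF X_box V_box] abs_coupling_le[OF V_box M[OF X_box]] \<Delta> \<open>0 \<le> E\<close> \<open>0 \<le> M\<close> R
    by (intro add_mono sum_mono mult_mono) auto
  also have "\<dots> \<le> (E + 1 + (real n + 1) * (2 * R * M)) * \<Delta>"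
    using \<Delta> by (simp add: sum.distrib algebra_simps)
  finally show ?thesis
    by (simp add: X_def[abs_def] V_def[abs_def] \<Delta>_def)
qed

lemma rdist_le_coord_norm:
  assumes eta_cont: "continuous_on UNIV (\<lambda>p. \<eta> (fst p) (snd p))"
    and f_cont: "\<And>j. 1 \<le> j \<Longrightarrow> j \<le> n \<Longrightarrow> continuous_on UNIV (f j)"
  shows "\<exists>K. \<forall>p q. coord_norm n p \<le> R \<longrightarrow> coord_norm n q \<le> R \<longrightarrow>
      rdist n \<eta> f p q \<le> K * coord_norm n (q - p)"
proof -
  obtain E where E: "\<And>x u. \<bar>x\<bar> \<le> R \<Longrightarrow> \<bar>u\<bar> \<le> R \<Longrightarrow> \<bar>\<eta> x u\<bar> \<le> E"
    using continuous_bounded_on_square[OF eta_cont] by blast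
  obtain M where M: "\<And>j x. \<bar>x\<bar> \<le> R \<Longrightarrow> \<bar>fext n f j x\<bar> \<le> M"
    using fext_bounded[where n = n and f = f, OF f_cont] by blast
  define K where "K = E + 1 + (real n + 1) * (2 * R * M)"
  have "rdist n \<eta> f p q \<le> K * coord_norm n (q - p)"
    if p: "coord_norm n p \<le> R" and q: "coord_norm n q \<le> R" for p q
  proof -
    let ?X = "\<lambda>t. fst p + t * (fst q - fst p)" and ?V = "\<lambda>j t. snd p j + t * (snd q j - snd p j)"
    have "rdist n \<eta> f p q \<le> curve_length n \<eta> f ?X ?V"
      by (rule rdist_le_curve_length[OF curve_joins_line])
    also have "\<dots> \<le> norm (integral {0..1} (curve_speed n \<eta> f ?X ?V))"
      by (simp add: curve_length_eq)
    also have "\<dots> \<le> K * coord_norm n (q - p) * (1 - 0)"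
    proof (rule integral_bound)
      show "continuous_on {0..1} (curve_speed n \<eta> f ?X ?V)"
        using continuous_on_curve_speed[OF eta_cont f_cont] curve_joins_line
        by (auto simp: curve_joins_def)
      show "norm (curve_speed n \<eta> f ?X ?V t) \<le> K * coord_norm n (q - p)" if "t \<in> {0..1}" for t
        using line_curve_speed_le[OF E M p q that] curve_speed_nonneg by (simp add: K_def)
    qed simp
    finally show ?thesis
      by simp
  qed
  then show ?thesis
    by blast
qed

section \<open>Completeness\<close>

lemma coord_norm_Cauchy_converges:
  fixes P :: "nat \<Rightarrow> real \<times> (nat \<Rightarrow> real)"
  assumes cauchy: "\<And>e. 0 < e \<Longrightarrow> \<exists>N. \<forall>m\<ge>N. \<forall>k\<ge>N. coord_norm n (P k - P m) < e"
  obtains q where "(\<lambda>k. coord_norm n (q - P k)) \<longlonglongrightarrow> 0"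
proof -
  have convergent: "convergent g" if g: "\<And>m k. \<bar>g k - g m\<bar> \<le> coord_norm n (P k - P m)"
    for g :: "nat \<Rightarrow> real"
  proof -
    have "Cauchy g"
    proof (rule metric_CauchyI)
      fix e :: real assume "0 < e"
      then obtain N where "\<forall>m\<ge>N. \<forall>k\<ge>N. coord_norm n (P k - P m) < e"
        using cauchy by blast
      then show "\<exists>N. \<forall>m\<ge>N. \<forall>k\<ge>N. dist (g m) (g k) < e"
        using g by (metis dist_real_def abs_minus_commute order.strict_trans1)
    qed
    then show ?thesis
      by (simp add: Cauchy_convergent_iff)
  qed
  define q where "q = (lim (\<lambda>k. fst (P k)), \<lambda>j. lim (\<lambda>k. snd (P k) j))"
  have "convergent (\<lambda>k. fst (P k))"
    by (rule convergent) (metis abs_fst_le_coord_norm fst_diff)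
  moreover have "convergent (\<lambda>k. snd (P k) j)" if "j \<le> n" for j
    by (rule convergent) (metis abs_snd_le_coord_norm[OF that] snd_diff minus_apply)
  ultimately have "(\<lambda>k. fst (P k)) \<longlonglongrightarrow> fst q" "\<And>j. j \<le> n \<Longrightarrow> (\<lambda>k. snd (P k) j) \<longlonglongrightarrow> snd q j"
    by (simp_all add: q_def convergent_LIMSEQ_iff)
  moreover have "(\<lambda>k. c - a k) \<longlonglongrightarrow> 0" if "a \<longlonglongrightarrow> c" for a :: "nat \<Rightarrow> real" and c
    using tendsto_diff[OF tendsto_const that, of c] by simp
  ultimately have "(\<lambda>k. fst q - fst (P k)) \<longlonglongrightarrow> 0" "\<And>j. j \<le> n \<Longrightarrow> (\<lambda>k. snd q j - snd (P k) j) \<longlonglongrightarrow> 0"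
    by blast+
  then have "(\<lambda>k. coord_norm n (q - P k)) \<longlonglongrightarrow> 0"
    unfolding coord_norm_def by (auto intro!: tendsto_add_zero tendsto_rabs_zero tendsto_null_sum)
  then show ?thesis
    using that by simp
qed

lemma Cauchy_eventually_coord_norm_bounded:
  fixes d :: "real \<times> (nat \<Rightarrow> real) \<Rightarrow> real \<times> (nat \<Rightarrow> real) \<Rightarrow> real"
    and P :: "nat \<Rightarrow> real \<times> (nat \<Rightarrow> real)"
  assumes coord_le: "\<And>R. \<exists>C. \<forall>p q e. coord_norm n p \<le> R \<longrightarrow> d p q < e \<longrightarrow> e \<le> 1 \<longrightarrow>
      coord_norm n (q - p) \<le> C * e"
    and cauchy: "\<forall>e>0. \<exists>N. \<forall>m\<ge>N. \<forall>k\<ge>N. d (P m) (P k) < e"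
  obtains R N0 where "\<And>k. N0 \<le> k \<Longrightarrow> coord_norm n (P k) \<le> R"
proof -
  obtain N0 where N0: "\<And>m k. N0 \<le> m \<Longrightarrow> N0 \<le> k \<Longrightarrow> d (P m) (P k) < 1"
    using cauchy by (meson zero_less_one)
  obtain C where C: "\<And>q e. d (P N0) q < e \<Longrightarrow> e \<le> 1 \<Longrightarrow> coord_norm n (q - P N0) \<le> C * e"
    using coord_le[of "coord_norm n (P N0)"] by blast
  have "coord_norm n (P k) \<le> C + coord_norm n (P N0)" if "N0 \<le> k" for k
    using coord_norm_le_diff_add[of n "P k" "P N0"] C[OF N0[OF order_refl that]] by simp
  then show ?thesis
    using that by blast
qed

lemma Cauchy_imp_coord_norm_Cauchy:
  fixes d :: "real \<times> (nat \<Rightarrow> real) \<Rightarrow> real \<times> (nat \<Rightarrow> real) \<Rightarrow> real"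
    and P :: "nat \<Rightarrow> real \<times> (nat \<Rightarrow> real)"
  assumes coord_le: "\<exists>C. \<forall>p q e. coord_norm n p \<le> R \<longrightarrow> d p q < e \<longrightarrow> e \<le> 1 \<longrightarrow>
      coord_norm n (q - p) \<le> C * e"
    and cauchy: "\<forall>e>0. \<exists>N. \<forall>m\<ge>N. \<forall>k\<ge>N. d (P m) (P k) < e"
    and bounded: "\<And>k. N0 \<le> k \<Longrightarrow> coord_norm n (P k) \<le> R"
    and "0 < e"
  shows "\<exists>N. \<forall>m\<ge>N. \<forall>k\<ge>N. coord_norm n (P k - P m) < e"
proof -
  obtain C where C: "\<And>p q e. coord_norm n p \<le> R \<Longrightarrow> d p q < e \<Longrightarrow> e \<le> 1 \<Longrightarrow>
      coord_norm n (q - p) \<le> C * e"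
    using coord_le by blast
  define e' where "e' = min 1 (e / (\<bar>C\<bar> + 1))"
  have e': "0 < e'" "e' \<le> 1" "C * e' < e"
    using \<open>0 < e\<close> by (auto simp: e'_def min_def field_simps abs_if split: if_splits)
  obtain N where "\<forall>m\<ge>N. \<forall>k\<ge>N. d (P m) (P k) < e'"
    using cauchy e'(1) by blast
  then have "\<forall>m\<ge>max N0 N. \<forall>k\<ge>max N0 N. coord_norm n (P k - P m) < e"
    using C[OF bounded _ e'(2)] e'(3) by (smt (verit) max.boundedE)
  then show ?thesis
    by blast
qed

lemma complete_if_comparable_to_coord_norm:
  fixes d :: "real \<times> (nat \<Rightarrow> real) \<Rightarrow> real \<times> (nat \<Rightarrow> real) \<Rightarrow> real"
    and P :: "nat \<Rightarrow> real \<times> (nat \<Rightarrow> real)"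
  assumes d_nonneg: "\<And>p q. 0 \<le> d p q"
    and coord_le: "\<And>R. \<exists>C. \<forall>p q e. coord_norm n p \<le> R \<longrightarrow> d p q < e \<longrightarrow> e \<le> 1 \<longrightarrow>
      coord_norm n (q - p) \<le> C * e"
    and d_le: "\<And>R. \<exists>K. \<forall>p q. coord_norm n p \<le> R \<longrightarrow> coord_norm n q \<le> R \<longrightarrow>
      d p q \<le> K * coord_norm n (q - p)"
    and cauchy: "\<forall>e>0. \<exists>N. \<forall>m\<ge>N. \<forall>k\<ge>N. d (P m) (P k) < e"
  shows "\<exists>q. (\<lambda>k. d (P k) q) \<longlonglongrightarrow> 0"
proof -
  obtain R N0 where bounded: "\<And>k. N0 \<le> k \<Longrightarrow> coord_norm n (P k) \<le> R"
    using Cauchy_eventually_coord_norm_bounded[OF coord_le cauchy] by blast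
  have "\<exists>N. \<forall>m\<ge>N. \<forall>k\<ge>N. coord_norm n (P k - P m) < e" if "0 < e" for e
    using Cauchy_imp_coord_norm_Cauchy[OF coord_le cauchy bounded that] .
  then obtain q where q: "(\<lambda>k. coord_norm n (q - P k)) \<longlonglongrightarrow> 0"
    by (rule coord_norm_Cauchy_converges)
  have "coord_norm n q \<le> R"
  proof (rule LIMSEQ_le_const)
    show "(\<lambda>k. coord_norm n (q - P k) + R) \<longlonglongrightarrow> R"
      using tendsto_add[OF q tendsto_const] by simp
    show "\<exists>N. \<forall>k\<ge>N. coord_norm n q \<le> coord_norm n (q - P k) + R"
      using coord_norm_le_diff_add[of n q] bounded by (meson add_left_mono order_trans)
  qed
  obtain K where K: "\<And>p. coord_norm n p \<le> R \<Longrightarrow> d p q \<le> K * coord_norm n (q - p)"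
    using d_le[of R] \<open>coord_norm n q \<le> R\<close> by blast
  have "(\<lambda>k. d (P k) q) \<longlonglongrightarrow> 0"
  proof (rule tendsto_sandwich[OF _ _ tendsto_const])
    show "\<forall>\<^sub>F k in sequentially. 0 \<le> d (P k) q"
      by (simp add: d_nonneg)
    show "\<forall>\<^sub>F k in sequentially. d (P k) q \<le> K * coord_norm n (q - P k)"
      unfolding eventually_sequentially using K bounded by blast
    show "(\<lambda>k. K * coord_norm n (q - P k)) \<longlonglongrightarrow> 0"
      using tendsto_mult_right_zero[OF q] by simp
  qed
  then show ?thesis
    by blast
qed

theorem corollary3p5:
  fixes n :: nat and f :: "nat \<Rightarrow> real \<Rightarrow> real" and \<eta> :: "real \<Rightarrow> real \<Rightarrow> real"
  assumes f_smooth: "\<And>j. 1 \<le> j \<Longrightarrow> j \<le> n \<Longrightarrow> smooth1 (f j)"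
    and eta_smooth: "smooth2 \<eta>"
    and eta_pos: "\<And>x u. \<eta> x u > 0"
    and eta_axis: "\<And>x. \<eta> x 0 = 1"
    and scal_le: "\<And>x u. scal \<eta> x u \<le> -2"
    and curv: "\<And>x. \<bar>pdu \<eta> x 0\<bar> \<le> 1"
  shows "metric_complete n \<eta> f"
proof -
  have eta_low: "\<And>x u. exp (- \<bar>u\<bar>) \<le> \<eta> x u"
    using exp_neg_abs_le_eta[OF eta_smooth eta_pos eta_axis scal_le curv] .
  have eta_cont: "continuous_on UNIV (\<lambda>p. \<eta> (fst p) (snd p))"
    using eta_smooth by (rule smooth2_continuous)
  have f_cont: "\<And>j. 1 \<le> j \<Longrightarrow> j \<le> n \<Longrightarrow> continuous_on UNIV (f j)"
    using f_smooth smooth1_continuous by blast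
  show ?thesis
    unfolding metric_complete_def
    using complete_if_comparable_to_coord_norm[OF rdist_nonneg
        rdist_less_imp_coord_norm_le[where n = n and f = f, OF eta_low eta_cont f_cont]
        rdist_le_coord_norm[where n = n and f = f, OF eta_cont f_cont]] by blast
qed

end
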